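(* Let $(\gamma_n)_{n\ge 0}$ be a sequence of positive reals satisfying conditions (C1)–(C7) below, and let $(p_n)_{n\ge0}$ be the associated symmetric orthonormal polynomials. Then for every $\omega\in\mathbb{R}$ the limit $\lim_{n\to\infty}\gamma_n\bigl(p_n^2(\omega)+p_{n+1}^2(\omega)\bigr)$ exists. Moreover, for every $B>0$ there exist constants $m_B, M_B$ with $0<m_B<M_B<\infty$ such that for all $\omega$ with $|\omega|\le B$, \[ m_B\le \lim_{n\to\infty}\gamma_n\bigl(p_n^2(\omega)+p_{n+1}^2(\omega)\bigr)\le M_B, \] and the convergence of this limit is uniform on the set $\{\omega: |\omega|\le B\}$.
   Context: Given positive reals $\gamma_n>0$ ($n\ge 0$), set $\gamma_{-1}=1$, $p_{-1}(\omega)=0$, $p_0(\omega)=1$, and define polynomials by the three-term recurrence $\gamma_n p_{n+1}(\omega)=\omega p_n(\omega)-\gamma_{n-1}p_{n-1}(\omega)$ for $n\ge0$; this is a symmetric positive definite orthonormal polynomial family with recursion coefficients $\gamma_n$. Let $\Delta_n=\gamma_{n+1}-\gamma_n$ and $\Delta^2_n=\Delta_{n+1}-\Delta_n$. The conditions are: (C1) $\gamma_n\to\infty$; (C2) $\Delta_n\to 0$; (C3) $(\gamma_n)$ is almost increasing: there exist $n_0,m_0$ such that $\gamma_{n+m}>\gamma_n$ for all $n\ge n_0$ and all $m\ge m_0$; (C4) $\sum_{j\ge0}1/\gamma_j=\infty$; (C5) there exists $\kappa>1$ with $\sum_{j\ge0}\gamma_j^{-\kappa}<\infty$; (C6) $\sum_{n\ge0}|\Delta_n|/\gamma_n^2<\infty$;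 (C7) $\sum_{n\ge0}|\Delta^2_n|/\gamma_n<\infty$. *)

theory Defs
  imports "HOL-Analysis.Analysis"
begin

text \<open>Orthonormal polynomials from the recurrence
  gamma_n p_{n+1}(w) = w p_n(w) - gamma_{n-1} p_{n-1}(w), with gamma_{-1} = 1,
  p_{-1} = 0, p_0 = 1. The auxiliary function returns the pair (p_n(w), p_{n+1}(w)).\<close>

fun opoly_pair :: "(nat \<Rightarrow> real) \<Rightarrow> real \<Rightarrow> nat \<Rightarrow> real \<times> real" where
  "opoly_pair g w 0 = (1, w / g 0)"
| "opoly_pair g w (Suc n) =
     (let (a, b) = opoly_pair g w n in (b, (w * b - g n * a) / g (Suc n)))"

definition opoly :: "(nat \<Rightarrow> real) \<Rightarrow> nat \<Rightarrow> real \<Rightarrow> real" where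
  "opoly g n w = fst (opoly_pair g w n)"

lemma opoly_0: "opoly g 0 w = 1"
  by (simp add: opoly_def)

lemma opoly_1: "opoly g 1 w = w / g 0"
  by (simp add: opoly_def)

lemma opoly_rec:
  assumes "g (Suc n) \<noteq> 0"
  shows "g (Suc n) * opoly g (Suc (Suc n)) w = w * opoly g (Suc n) w - g n * opoly g n w"
proof -
  have snd: "snd (opoly_pair g w m) = fst (opoly_pair g w (Suc m))" for m
    by (simp add: case_prod_beta)
  show ?thesis using assms
    by (simp add: opoly_def case_prod_beta snd[symmetric])
qed

end

theory Submission
  imports Defs
begin

(* Let h_n = gamma_n (p_n^2 + p_(n+1)^2) - omega p_n p_(n+1). Once gamma_n is large compared with
   |omega|, h_n is a positive definite quadratic form in (p_n, p_(n+1)) and differs from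
   gamma_n (p_n^2 + p_(n+1)^2) by a term of relative size |omega| / gamma_n. The recurrence gives
   ln h_(n+1) - ln h_n = a_n rho_n + O(|Delta_n| / gamma_n^2) with a_n = Delta_n / gamma_(n+1) and
   rho_n = 1 - 2 gamma_n p_n^2 / h_n, where rho_n is bounded and nearly alternating:
   rho_n + rho_(n+1) = O(1 / gamma_n). Summation by parts turns the sum of a_n rho_n into series
   that converge absolutely by (C6) and (C7), uniformly for |omega| <= B. Hence ln h_n converges
   uniformly and stays bounded, and exponentiating gives the theorem. *)

section \<open>Uniform convergence via summation by parts\<close>

lemma abs_mult_le_mult:
  fixes a b A B :: real
  assumes "\<bar>a\<bar> \<le> A" "\<bar>b\<bar> \<le> B"
  shows "\<bar>a * b\<bar> \<le> A * B"
  unfolding abs_mult using assms by (intro mult_mono) auto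

lemma abs_mult_le_half_sum_squares: "\<bar>x * y\<bar> \<le> (x\<^sup>2 + y\<^sup>2) / 2" for x y :: real
  using sum_squares_bound[of "\<bar>x\<bar>" "\<bar>y\<bar>"] by (simp add: abs_mult)

lemma filterlim_sequentially_shift_iff:
  "filterlim (\<lambda>n. f (n + k)) F sequentially \<longleftrightarrow> filterlim f F sequentially"
proof -
  have "eventually (\<lambda>n. P (f (n + k))) sequentially \<longleftrightarrow> eventually (\<lambda>n. P (f n)) sequentially" for P
    using eventually_sequentially_seg[of "\<lambda>n. P (f n)" k] by simp
  then show ?thesis
    unfolding filterlim_iff by simp
qed

lemma tendsto_imp_uniform_limit_const:
  fixes c :: "'a \<Rightarrow> 'b :: metric_space"
  assumes "(c \<longlongrightarrow> l) F"
  shows "uniform_limit S (\<lambda>n x. c n) (\<lambda>x. l) F"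
  using assms unfolding uniform_limit_iff tendsto_iff by simp

lemma uniform_limit_imp_lim_eq:
  assumes "uniform_limit S f l sequentially" "x \<in> S"
  shows "lim (\<lambda>n. f n x) = l x"
  using tendsto_uniform_limitI[OF assms] by (rule limI)

lemma uniform_limit_lim:
  assumes "uniform_limit S f l sequentially"
  shows "uniform_limit S f (\<lambda>x. lim (\<lambda>n. f n x)) sequentially"
  using assms by (rule uniform_limit_cong'[THEN iffD1, rotated -1])
    (simp_all add: uniform_limit_imp_lim_eq[OF assms])

lemma uniform_limit_exp:
  fixes f :: "'b \<Rightarrow> 'a \<Rightarrow> real"
  assumes "uniform_limit X f g F" "\<And>n x. x \<in> X \<Longrightarrow> \<bar>f n x\<bar> \<le> K"
  shows "uniform_limit X (\<lambda>n x. exp (f n x)) (\<lambda>x. exp (g x)) F"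
proof (rule uniform_limit_compose_uniformly_continuous_on[OF assms(1)])
  show "uniformly_continuous_on {-K..K} exp"
    by (intro compact_uniformly_continuous continuous_intros) auto
  show "\<forall>\<^sub>F n in F. \<forall>x\<in>X. f n x \<in> {-K..K}"
  proof (intro always_eventually allI ballI)
    fix n x assume "x \<in> X"
    then show "f n x \<in> {-K..K}"
      using assms(2)[of x n] by (simp add: abs_le_iff)
  qed
qed simp

lemma uniform_limit_partial_sums:
  fixes u :: "nat \<Rightarrow> 'a \<Rightarrow> real"
  assumes u_le: "\<And>k x. x \<in> X \<Longrightarrow> \<bar>u k x\<bar> \<le> M k" and "summable M"
  shows "uniform_limit X (\<lambda>n x. \<Sum>k<n. u k x) (\<lambda>x. \<Sum>k. u k x) sequentially"
    and "\<exists>K. \<forall>n. \<forall>x\<in>X. \<bar>\<Sum>k<n. u k x\<bar> \<le> K"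
proof -
  show "uniform_limit X (\<lambda>n x. \<Sum>k<n. u k x) (\<lambda>x. \<Sum>k. u k x) sequentially"
    using assms by (intro Weierstrass_m_test) auto
  have "Bseq (\<lambda>n. \<Sum>k<n. M k)"
    using \<open>summable M\<close> by (simp add: summable_iff_convergent convergent_imp_Bseq)
  then obtain K where K: "\<And>n. \<bar>\<Sum>k<n. M k\<bar> \<le> K"
    by (metis BseqE real_norm_def)
  have "\<bar>\<Sum>k<n. u k x\<bar> \<le> K" if "x \<in> X" for n x
  proof -
    have "\<bar>\<Sum>k<n. u k x\<bar> \<le> (\<Sum>k<n. \<bar>u k x\<bar>)"
      by (rule sum_abs)
    also have "\<dots> \<le> (\<Sum>k<n. M k)"
      by (rule sum_mono) (rule u_le[OF that])
    finally show ?thesis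
      using K[of n] by linarith
  qed
  then show "\<exists>K. \<forall>n. \<forall>x\<in>X. \<bar>\<Sum>k<n. u k x\<bar> \<le> K"
    by blast
qed

lemma uniform_limit_null_mult:
  fixes A :: "nat \<Rightarrow> real" and R :: "nat \<Rightarrow> 'a \<Rightarrow> real"
  assumes "A \<longlonglongrightarrow> 0" and "\<And>n x. x \<in> X \<Longrightarrow> \<bar>R n x\<bar> \<le> r"
  shows "uniform_limit X (\<lambda>n x. A n * R n x) (\<lambda>x. 0) sequentially"
proof (rule uniform_limit_null_comparison)
  show "\<forall>\<^sub>F n in sequentially. \<forall>x\<in>X. norm (A n * R n x) \<le> \<bar>A n\<bar> * r"
    using assms(2) by (auto simp: abs_mult intro!: mult_left_mono always_eventually)
  show "uniform_limit X (\<lambda>n x. \<bar>A n\<bar> * r) (\<lambda>x. 0) sequentially"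
    using tendsto_mult_right_zero[OF tendsto_rabs_zero[OF assms(1)], of r]
    by (intro tendsto_imp_uniform_limit_const) (simp add: mult.commute)
qed

lemma uniform_limit_abs_le:
  fixes L :: "nat \<Rightarrow> 'a \<Rightarrow> real"
  assumes "uniform_limit X L Lf sequentially" "x \<in> X" "\<And>n. \<bar>L n x\<bar> \<le> K"
  shows "\<bar>Lf x\<bar> \<le> K"
  using tendsto_rabs[OF tendsto_uniform_limitI[OF assms(1,2)]] assms(3) by (intro LIMSEQ_le_const2) auto

lemma telescope_by_parts:
  fixes L A R :: "nat \<Rightarrow> real"
  shows "L n = L 0 + ((\<Sum>k<n. A k * (R k + R (Suc k)) - (A k - A (Suc k)) * R (Suc k))
      + A 0 * R 0 - A n * R n) / 2 + (\<Sum>k<n. L (Suc k) - L k - A k * R k)"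
  by (induction n) (auto simp: field_simps)

lemma uniform_limit_by_parts_perturbation:
  fixes L R :: "nat \<Rightarrow> 'a \<Rightarrow> real" and A e e' :: "nat \<Rightarrow> real"
  assumes step: "\<And>n x. x \<in> X \<Longrightarrow> \<bar>L (Suc n) x - L n x - A n * R n x\<bar> \<le> e n" and "summable e"
    and R_le: "\<And>n x. x \<in> X \<Longrightarrow> \<bar>R n x\<bar> \<le> r"
    and pair_le: "\<And>n x. x \<in> X \<Longrightarrow> \<bar>A n * (R n x + R (Suc n) x)\<bar> \<le> e' n" and "summable e'"
    and A_var: "summable (\<lambda>n. \<bar>A (Suc n) - A n\<bar>)" and A_lim: "A \<longlonglongrightarrow> 0"
    and L0_le: "\<And>x. x \<in> X \<Longrightarrow> \<bar>L 0 x\<bar> \<le> K0"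
  obtains Lf K where "uniform_limit X L Lf sequentially"
    and "\<And>n x. x \<in> X \<Longrightarrow> \<bar>L n x\<bar> \<le> K" and "\<And>x. x \<in> X \<Longrightarrow> \<bar>Lf x\<bar> \<le> K"
proof -
  define U where "U k x = A k * (R k x + R (Suc k) x) - (A k - A (Suc k)) * R (Suc k) x" for k x
  define D where "D k x = L (Suc k) x - L k x - A k * R k x" for k x
  have U_bound: "\<bar>U k x\<bar> \<le> e' k + \<bar>A (Suc k) - A k\<bar> * r" if "x \<in> X" for k x
  proof -
    have "\<bar>(A k - A (Suc k)) * R (Suc k) x\<bar> \<le> \<bar>A (Suc k) - A k\<bar> * r"
      using R_le[OF that] by (intro abs_mult_le_mult) (auto simp: abs_minus_commute)
    then show ?thesis
      using pair_le[OF that, of k] unfolding U_def by linarith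
  qed
  have U_summable: "summable (\<lambda>k. e' k + \<bar>A (Suc k) - A k\<bar> * r)"
    using assms by (intro summable_add summable_mult2)
  obtain KU where U_le: "\<forall>n. \<forall>x\<in>X. \<bar>\<Sum>k<n. U k x\<bar> \<le> KU"
    using uniform_limit_partial_sums(2)[OF U_bound U_summable] ..
  have D_bound: "\<bar>D k x\<bar> \<le> e k" if "x \<in> X" for k x
    using step[OF that] by (simp add: D_def)
  obtain KD where D_le: "\<forall>n. \<forall>x\<in>X. \<bar>\<Sum>k<n. D k x\<bar> \<le> KD"
    using uniform_limit_partial_sums(2)[OF D_bound \<open>summable e\<close>] ..
  obtain KA where KA: "\<And>n. \<bar>A n\<bar> \<le> KA"
    using convergent_imp_Bseq[OF convergentI[OF A_lim]] by (metis BseqE real_norm_def)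
  have L_eq: "L n x = L 0 x + ((\<Sum>k<n. U k x) + A 0 * R 0 x - A n * R n x) / 2 + (\<Sum>k<n. D k x)" for n x
    unfolding U_def D_def by (rule telescope_by_parts)
  have "uniform_limit X
      (\<lambda>n x. L 0 x + ((\<Sum>k<n. U k x) + A 0 * R 0 x - A n * R n x) / 2 + (\<Sum>k<n. D k x))
      (\<lambda>x. L 0 x + ((\<Sum>k. U k x) + A 0 * R 0 x - 0) / 2 + (\<Sum>k. D k x)) sequentially"
    using uniform_limit_partial_sums(1)[OF U_bound U_summable]
      uniform_limit_partial_sums(1)[OF D_bound \<open>summable e\<close>] uniform_limit_null_mult[OF A_lim R_le]
    by (intro uniform_limit_intros)
  moreover define Lf where "Lf = (\<lambda>x. L 0 x + ((\<Sum>k. U k x) + A 0 * R 0 x) / 2 + (\<Sum>k. D k x))"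
  ultimately have lim: "uniform_limit X L Lf sequentially"
    by (simp only: L_eq[symmetric] diff_zero)
  define K where "K = K0 + (KU + 2 * (KA * r)) / 2 + KD"
  have L_le: "\<bar>L n x\<bar> \<le> K" if "x \<in> X" for n x
  proof -
    have "\<bar>\<Sum>k<n. U k x\<bar> \<le> KU" "\<bar>\<Sum>k<n. D k x\<bar> \<le> KD"
      using U_le D_le that by blast+
    moreover have "\<bar>A 0 * R 0 x\<bar> \<le> KA * r" "\<bar>A n * R n x\<bar> \<le> KA * r"
      using KA R_le[OF that] by (blast intro: abs_mult_le_mult)+
    ultimately show ?thesis
      using L0_le[OF that] unfolding L_eq[of n] K_def by (auto simp: abs_le_iff field_simps)
  qed
  then show thesis
    using that[OF lim] uniform_limit_abs_le[OF lim] by blast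
qed

section \<open>A quadratic form along the three-term recurrence\<close>

definition qform :: "real \<Rightarrow> real \<Rightarrow> real \<Rightarrow> real \<Rightarrow> real" where
  "qform g w x y = g * (x\<^sup>2 + y\<^sup>2) - w * x * y"

lemma qform_lower_bound:
  fixes g w x y B :: real
  assumes "\<bar>w\<bar> \<le> B" "B \<le> g"
  shows "\<bar>w * x * y\<bar> \<le> B * (x\<^sup>2 + y\<^sup>2) / 2" and "g * (x\<^sup>2 + y\<^sup>2) / 2 \<le> qform g w x y"
proof -
  show wxy: "\<bar>w * x * y\<bar> \<le> B * (x\<^sup>2 + y\<^sup>2) / 2"
    using abs_mult_le_mult[OF assms(1) abs_mult_le_half_sum_squares[of x y]] by (simp add: mult.assoc)
  have "B * (x\<^sup>2 + y\<^sup>2) \<le> g * (x\<^sup>2 + y\<^sup>2)"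
    using assms(2) by (intro mult_right_mono) auto
  then show "g * (x\<^sup>2 + y\<^sup>2) / 2 \<le> qform g w x y"
    using wxy unfolding qform_def by (auto simp: abs_le_iff)
qed

lemma qform_step:
  fixes g G w x y z :: real
  assumes "G \<noteq> 0" and rec: "G * z = w * y - g * x"
  shows "qform G w y z = qform g w x y + (G - g) / G * (G * y\<^sup>2 - g * x\<^sup>2 + w * x * y)"
proof -
  have "G * qform G w y z = G\<^sup>2 * y\<^sup>2 + (G * z)\<^sup>2 - w * y * (G * z)"
    unfolding qform_def by (simp add: algebra_simps power2_eq_square)
  also have "\<dots> = G * (qform g w x y + (G - g) / G * (G * y\<^sup>2 - g * x\<^sup>2 + w * x * y))"
    unfolding rec qform_def using assms(1) by (simp add: field_simps power2_eq_square)
  finally show ?thesis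
    using assms(1) by simp
qed

lemma qform_rho_sum_eq:
  fixes g G w x y z :: real
  assumes "qform g w x y \<noteq> 0" "qform G w y z \<noteq> 0"
  shows "(1 - 2 * g * x\<^sup>2 / qform g w x y) + (1 - 2 * G * y\<^sup>2 / qform G w y z) =
    2 * (g * G * y\<^sup>2 * (z\<^sup>2 - x\<^sup>2) - g * w * y ^ 3 * z - w * G * x * y * z\<^sup>2 + w\<^sup>2 * x * y\<^sup>2 * z)
      / (qform g w x y * qform G w y z)"
proof -
  have "qform g w x y * qform G w y z - g * x\<^sup>2 * qform G w y z - G * y\<^sup>2 * qform g w x y =
      g * G * y\<^sup>2 * (z\<^sup>2 - x\<^sup>2) - g * w * y ^ 3 * z - w * G * x * y * z\<^sup>2 + w\<^sup>2 * x * y\<^sup>2 * z"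
    unfolding qform_def by (simp add: algebra_simps power2_eq_square power3_eq_cube)
  then show ?thesis
    using assms by (simp add: field_simps)
qed

text \<open>The variables stand for \<open>g = \<gamma> n\<close>, \<open>G = \<gamma> (n + 1)\<close>, \<open>w = \<omega>\<close> and three consecutive
  polynomial values \<open>x, y, z\<close>; then \<open>qform g w x y\<close> is \<open>h\<^sub>n\<close> and \<open>1 - 2 * g * x\<^sup>2 / qform g w x y\<close>
  is \<open>\<rho>\<^sub>n\<close>. The bound \<open>4 * B + 32 \<le> g\<close> gives \<open>B \<le> g / 4\<close> and \<open>\<bar>G - g\<bar> / g \<le> 1 / 32\<close>, which keeps
  \<open>h\<^sub>n\<^sub>+\<^sub>1 / h\<^sub>n\<close> within \<open>[1/2, 3/2]\<close> where the logarithm is expanded.\<close>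

locale recurrence_step =
  fixes B g G w x y z :: real
  assumes B_pos: "0 < B" and g_large: "4 * B + 32 \<le> g" and G_close: "\<bar>G - g\<bar> \<le> 1"
    and w_le: "\<bar>w\<bar> \<le> B" and recurrence: "G * z = w * y - g * x"
    and nontrivial: "x \<noteq> 0 \<or> y \<noteq> 0"
begin

lemma g_pos: "0 < g" and B_le_g: "B \<le> g"
  using B_pos g_large by auto

lemma G_bounds: "g / 2 \<le> G" "G \<le> 2 * g" "B \<le> G" "0 < G"
  using B_pos g_large G_close by (auto simp: abs_le_iff)

lemma sum_squares_pos: "0 < x\<^sup>2 + y\<^sup>2" "0 < y\<^sup>2 + z\<^sup>2"
proof -
  show "0 < x\<^sup>2 + y\<^sup>2"
    using nontrivial by (simp add: sum_power2_gt_zero_iff)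
  have "y \<noteq> 0 \<or> z \<noteq> 0"
    using nontrivial recurrence g_pos by auto
  then show "0 < y\<^sup>2 + z\<^sup>2"
    by (simp add: sum_power2_gt_zero_iff)
qed

lemma qform_lower: "g * (x\<^sup>2 + y\<^sup>2) / 2 \<le> qform g w x y" "G * (y\<^sup>2 + z\<^sup>2) / 2 \<le> qform G w y z"
  using qform_lower_bound(2)[OF w_le B_le_g] qform_lower_bound(2)[OF w_le G_bounds(3)] by auto

lemma qform_pos: "0 < qform g w x y" "0 < qform G w y z"
proof -
  have "0 < g * (x\<^sup>2 + y\<^sup>2) / 2" "0 < G * (y\<^sup>2 + z\<^sup>2) / 2"
    using g_pos G_bounds(4) sum_squares_pos by simp_all
  then show "0 < qform g w x y" "0 < qform G w y z"
    using qform_lower by linarith+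
qed

lemma abs_cross_term_le: "\<bar>w * x * y\<bar> \<le> B * qform g w x y / g"
proof -
  have "(x\<^sup>2 + y\<^sup>2) / 2 \<le> qform g w x y / g"
    using qform_lower(1) g_pos by (simp add: field_simps)
  then have "B * ((x\<^sup>2 + y\<^sup>2) / 2) \<le> B * (qform g w x y / g)"
    using B_pos by (intro mult_left_mono) auto
  then show ?thesis
    using qform_lower_bound(1)[OF w_le B_le_g, of x y] by (simp only: times_divide_eq_right)
qed

lemma rho_le: "\<bar>1 - 2 * g * x\<^sup>2 / qform g w x y\<bar> \<le> 3"
proof -
  have "g * x\<^sup>2 \<le> g * (x\<^sup>2 + y\<^sup>2)"
    using g_pos by (intro mult_left_mono) auto
  then have "2 * g * x\<^sup>2 \<le> 4 * qform g w x y"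
    using qform_lower(1) by linarith
  then have "2 * g * x\<^sup>2 / qform g w x y \<le> 4"
    using qform_pos(1) by (simp add: divide_le_eq)
  moreover have "0 \<le> 2 * g * x\<^sup>2 / qform g w x y"
    using g_pos qform_pos(1) by simp
  ultimately show ?thesis
    by (simp add: abs_le_iff)
qed

lemma abs_square_diff_le: "\<bar>G\<^sup>2 * (z\<^sup>2 - x\<^sup>2)\<bar> \<le> (B\<^sup>2 + B * g + 3 * g) * (x\<^sup>2 + y\<^sup>2)"
proof -
  define S where "S = x\<^sup>2 + y\<^sup>2"
  have "G\<^sup>2 * (z\<^sup>2 - x\<^sup>2) = w\<^sup>2 * y\<^sup>2 - (2 * g) * (w * (x * y)) + ((g - G) * (g + G)) * x\<^sup>2"
    using arg_cong[OF recurrence, of "\<lambda>t. t\<^sup>2"] by (simp add: algebra_simps power2_eq_square)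
  moreover have "\<bar>w\<^sup>2 * y\<^sup>2\<bar> \<le> B\<^sup>2 * S"
    using power_mono[OF w_le, of 2] by (intro abs_mult_le_mult) (auto simp: S_def)
  moreover have "\<bar>(2 * g) * (w * (x * y))\<bar> \<le> (2 * g) * (B * (S / 2))"
    using g_pos w_le abs_mult_le_half_sum_squares[of x y] by (intro abs_mult_le_mult) (auto simp: S_def)
  moreover have "\<bar>((g - G) * (g + G)) * x\<^sup>2\<bar> \<le> (1 * (3 * g)) * S"
    using G_close G_bounds g_pos
    by (intro abs_mult_le_mult) (auto simp: S_def abs_minus_commute intro!: abs_mult_le_mult)
  ultimately have "\<bar>G\<^sup>2 * (z\<^sup>2 - x\<^sup>2)\<bar> \<le> B\<^sup>2 * S + (2 * g) * (B * (S / 2)) + (1 * (3 * g)) * S"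
    by (smt (verit) abs_triangle_ineq abs_triangle_ineq4)
  also have "\<dots> = (B\<^sup>2 + B * g + 3 * g) * S"
    by (simp add: field_simps)
  finally show ?thesis
    by (simp add: S_def)
qed

lemma rho_sum_numerator_le:
  "\<bar>g * G * y\<^sup>2 * (z\<^sup>2 - x\<^sup>2) - g * w * y ^ 3 * z - w * G * x * y * z\<^sup>2 + w\<^sup>2 * x * y\<^sup>2 * z\<bar>
    \<le> g * (3 * B\<^sup>2 + 4 * B + 6) * ((x\<^sup>2 + y\<^sup>2) * (y\<^sup>2 + z\<^sup>2))"
proof -
  define S where "S = x\<^sup>2 + y\<^sup>2"
  define S' where "S' = y\<^sup>2 + z\<^sup>2"
  have sq_le: "x\<^sup>2 \<le> S" "y\<^sup>2 \<le> S" "y\<^sup>2 \<le> S'" "z\<^sup>2 \<le> S'"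
    by (auto simp: S_def S'_def)
  have xy: "\<bar>x * y\<bar> \<le> S / 2" and yz: "\<bar>y * z\<bar> \<le> S' / 2"
    using abs_mult_le_half_sum_squares by (simp_all add: S_def S'_def)
  have w2: "w\<^sup>2 \<le> B\<^sup>2"
    using power_mono[OF w_le, of 2] by simp
  have "\<bar>g / G\<bar> \<le> 2"
    using G_bounds g_pos by (simp add: divide_le_eq)
  then have "\<bar>(g / G * y\<^sup>2) * (G\<^sup>2 * (z\<^sup>2 - x\<^sup>2))\<bar> \<le> (2 * S') * ((B\<^sup>2 + B * g + 3 * g) * S)"
    using sq_le by (intro abs_mult_le_mult[OF abs_mult_le_mult abs_square_diff_le[folded S_def]]) auto
  moreover have "g * G * y\<^sup>2 * (z\<^sup>2 - x\<^sup>2) = (g / G * y\<^sup>2) * (G\<^sup>2 * (z\<^sup>2 - x\<^sup>2))"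
    using G_bounds by (simp add: field_simps power2_eq_square)
  ultimately have T1: "\<bar>g * G * y\<^sup>2 * (z\<^sup>2 - x\<^sup>2)\<bar> \<le> (2 * B\<^sup>2 + 2 * B * g + 6 * g) * (S * S')"
    by (simp add: algebra_simps)
  have "\<bar>(g * y\<^sup>2) * (w * (y * z))\<bar> \<le> (g * S) * (B * (S' / 2))"
    using g_pos sq_le w_le yz by (intro abs_mult_le_mult) auto
  then have T2: "\<bar>g * w * y ^ 3 * z\<bar> \<le> (g * B / 2) * (S * S')"
    by (simp add: algebra_simps power2_eq_square power3_eq_cube)
  have "\<bar>(w * G) * ((x * y) * z\<^sup>2)\<bar> \<le> (B * (2 * g)) * ((S / 2) * S')"
    using w_le G_bounds xy sq_le by (intro abs_mult_le_mult) (auto intro!: abs_mult_le_mult)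
  then have T3: "\<bar>w * G * x * y * z\<^sup>2\<bar> \<le> (B * g) * (S * S')"
    by (simp add: algebra_simps)
  have "\<bar>w\<^sup>2 * ((x * y) * (y * z))\<bar> \<le> B\<^sup>2 * ((S / 2) * (S' / 2))"
    using w2 xy yz by (intro abs_mult_le_mult) (auto intro!: abs_mult_le_mult)
  then have T4: "\<bar>w\<^sup>2 * x * y\<^sup>2 * z\<bar> \<le> (B\<^sup>2 / 4) * (S * S')"
    by (simp add: algebra_simps power2_eq_square)
  have "\<bar>g * G * y\<^sup>2 * (z\<^sup>2 - x\<^sup>2) - g * w * y ^ 3 * z - w * G * x * y * z\<^sup>2 + w\<^sup>2 * x * y\<^sup>2 * z\<bar>
      \<le> (9 / 4 * B\<^sup>2 + 7 / 2 * (B * g) + 6 * g) * (S * S')"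
    using T1 T2 T3 T4 by (simp add: algebra_simps)
  also have "\<dots> \<le> g * (3 * B\<^sup>2 + 4 * B + 6) * (S * S')"
  proof (rule mult_right_mono)
    have "9 / 4 * B\<^sup>2 \<le> 3 * B\<^sup>2 * g" "7 / 2 * (B * g) \<le> 4 * B * g"
      using g_large B_pos by auto
    then show "9 / 4 * B\<^sup>2 + 7 / 2 * (B * g) + 6 * g \<le> g * (3 * B\<^sup>2 + 4 * B + 6)"
      by (simp add: algebra_simps)
  qed (simp add: S_def S'_def)
  finally show ?thesis
    by (simp add: S_def S'_def)
qed

lemma rho_sum_le:
  "\<bar>(1 - 2 * g * x\<^sup>2 / qform g w x y) + (1 - 2 * G * y\<^sup>2 / qform G w y z)\<bar>
    \<le> 16 * (3 * B\<^sup>2 + 4 * B + 6) / g"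
proof -
  define P where "P = (x\<^sup>2 + y\<^sup>2) * (y\<^sup>2 + z\<^sup>2)"
  have P_pos: "0 < P"
    using sum_squares_pos by (simp add: P_def)
  have "(g / 2) * (y\<^sup>2 + z\<^sup>2) / 2 \<le> G * (y\<^sup>2 + z\<^sup>2) / 2"
    using G_bounds(1) sum_squares_pos by (intro divide_right_mono mult_right_mono) auto
  then have "(g / 2) * (y\<^sup>2 + z\<^sup>2) / 2 \<le> qform G w y z"
    using qform_lower(2) by linarith
  then have "(g * (x\<^sup>2 + y\<^sup>2) / 2) * ((g / 2) * (y\<^sup>2 + z\<^sup>2) / 2) \<le> qform g w x y * qform G w y z"
    using qform_lower(1) g_pos sum_squares_pos qform_pos by (intro mult_mono) auto
  then have denom: "g\<^sup>2 * P / 8 \<le> qform g w x y * qform G w y z"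
    by (simp add: P_def power2_eq_square mult_ac)
  have "\<bar>(1 - 2 * g * x\<^sup>2 / qform g w x y) + (1 - 2 * G * y\<^sup>2 / qform G w y z)\<bar>
      \<le> 2 * (g * (3 * B\<^sup>2 + 4 * B + 6) * P) / (qform g w x y * qform G w y z)"
    unfolding qform_rho_sum_eq[OF qform_pos[THEN less_imp_neq, THEN not_sym]]
    using rho_sum_numerator_le qform_pos
    by (simp add: abs_mult P_def divide_right_mono)
  also have "\<dots> \<le> 2 * (g * (3 * B\<^sup>2 + 4 * B + 6) * P) / (g\<^sup>2 * P / 8)"
    using denom g_pos B_pos P_pos qform_pos by (intro divide_left_mono) auto
  also have "\<dots> = 16 * (3 * B\<^sup>2 + 4 * B + 6) / g"
    using g_pos P_pos by (simp add: field_simps power2_eq_square)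
  finally show ?thesis .
qed

lemma step_coeff_le: "\<bar>(G - g) / G\<bar> \<le> 2 * \<bar>G - g\<bar> / g" "\<bar>(G - g) / G\<bar> \<le> 1 / 16"
proof -
  have "\<bar>(G - g) / G\<bar> = \<bar>G - g\<bar> / G"
    using G_bounds by simp
  also have "\<dots> \<le> \<bar>G - g\<bar> / (g / 2)"
    using G_bounds g_pos by (intro divide_left_mono) auto
  finally show le: "\<bar>(G - g) / G\<bar> \<le> 2 * \<bar>G - g\<bar> / g"
    by (simp add: mult.commute)
  have "2 * \<bar>G - g\<bar> / g \<le> 2 * 1 / 32"
    using G_close g_large B_pos by (intro frac_le) auto
  with le show "\<bar>(G - g) / G\<bar> \<le> 1 / 16"
    by linarith
qed

lemma step_coeff_mult_rho_sum_le:
  "\<bar>(G - g) / G * ((1 - 2 * g * x\<^sup>2 / qform g w x y) + (1 - 2 * G * y\<^sup>2 / qform G w y z))\<bar>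
    \<le> 32 * (3 * B\<^sup>2 + 4 * B + 6) * (\<bar>G - g\<bar> / g\<^sup>2)"
proof -
  have "\<bar>(G - g) / G * ((1 - 2 * g * x\<^sup>2 / qform g w x y) + (1 - 2 * G * y\<^sup>2 / qform G w y z))\<bar>
      \<le> (2 * \<bar>G - g\<bar> / g) * (16 * (3 * B\<^sup>2 + 4 * B + 6) / g)"
    by (rule abs_mult_le_mult[OF step_coeff_le(1) rho_sum_le])
  also have "\<dots> = 32 * (3 * B\<^sup>2 + 4 * B + 6) * (\<bar>G - g\<bar> / g\<^sup>2)"
    by (simp add: power2_eq_square field_simps)
  finally show ?thesis .
qed

lemma step_ratio_le: "\<bar>(G * y\<^sup>2 - g * x\<^sup>2 + w * x * y) / qform g w x y\<bar> \<le> 8"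
proof -
  have "0 \<le> G * y\<^sup>2" "0 \<le> g * x\<^sup>2"
    using G_bounds g_pos by simp_all
  then have "\<bar>G * y\<^sup>2 - g * x\<^sup>2 + w * x * y\<bar> \<le> G * y\<^sup>2 + g * x\<^sup>2 + \<bar>w * x * y\<bar>"
    unfolding abs_le_iff using abs_ge_self[of "w * x * y"] abs_ge_minus_self[of "w * x * y"] by linarith
  moreover have "G * y\<^sup>2 \<le> 2 * g * (x\<^sup>2 + y\<^sup>2)" "g * x\<^sup>2 \<le> g * (x\<^sup>2 + y\<^sup>2)"
    using G_bounds g_pos by (auto intro!: mult_mono)
  moreover have "B * (x\<^sup>2 + y\<^sup>2) \<le> g * (x\<^sup>2 + y\<^sup>2)"
    using B_le_g by (intro mult_right_mono) auto
  ultimately have "\<bar>G * y\<^sup>2 - g * x\<^sup>2 + w * x * y\<bar> \<le> 8 * qform g w x y"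
    using qform_lower_bound(1)[OF w_le B_le_g, of x y] qform_lower(1) by linarith
  then show ?thesis
    using qform_pos(1) by (simp add: divide_le_eq)
qed

lemma step_ratio_near_rho:
  "\<bar>(G * y\<^sup>2 - g * x\<^sup>2 + w * x * y) / qform g w x y - (1 - 2 * g * x\<^sup>2 / qform g w x y)\<bar>
    \<le> 2 * (1 + B) / g"
proof -
  define S where "S = x\<^sup>2 + y\<^sup>2"
  have S_pos: "0 < S" and h_low: "g * S / 2 \<le> qform g w x y"
    using sum_squares_pos(1) qform_lower(1) by (simp_all add: S_def)
  have "(G * y\<^sup>2 - g * x\<^sup>2 + w * x * y) / qform g w x y - (1 - 2 * g * x\<^sup>2 / qform g w x y)
      = ((G * y\<^sup>2 - g * x\<^sup>2 + w * x * y) - (qform g w x y - 2 * g * x\<^sup>2)) / qform g w x y"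
    using qform_pos(1) by (simp add: field_simps)
  also have "(G * y\<^sup>2 - g * x\<^sup>2 + w * x * y) - (qform g w x y - 2 * g * x\<^sup>2) = (G - g) * y\<^sup>2 + 2 * (w * x * y)"
    by (simp add: qform_def algebra_simps)
  moreover have "\<bar>(G - g) * y\<^sup>2 + 2 * (w * x * y)\<bar> \<le> (1 + B) * S"
    using abs_mult_le_mult[OF G_close, of "y\<^sup>2" S] qform_lower_bound(1)[OF w_le B_le_g, of x y]
    by (auto simp: S_def algebra_simps abs_le_iff)
  ultimately have "\<bar>(G * y\<^sup>2 - g * x\<^sup>2 + w * x * y) / qform g w x y - (1 - 2 * g * x\<^sup>2 / qform g w x y)\<bar>
      \<le> (1 + B) * S / qform g w x y"
    using qform_pos(1) by (simp add: divide_right_mono)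
  also have "\<dots> \<le> (1 + B) * S / (g * S / 2)"
    using h_low g_pos S_pos B_pos qform_pos(1) by (intro divide_left_mono) auto
  also have "\<dots> = 2 * (1 + B) / g"
    using g_pos S_pos by (simp add: field_simps)
  finally show ?thesis .
qed

lemma ln_qform_step_le:
  "\<bar>ln (qform G w y z) - ln (qform g w x y) - (G - g) / G * (1 - 2 * g * x\<^sup>2 / qform g w x y)\<bar>
    \<le> (516 + 4 * B) * \<bar>G - g\<bar> / g\<^sup>2"
proof -
  define h where "h = qform g w x y"
  define a where "a = (G - g) / G"
  define N where "N = (G * y\<^sup>2 - g * x\<^sup>2 + w * x * y) / h"
  define \<rho> where "\<rho> = 1 - 2 * g * x\<^sup>2 / h"
  have h_pos: "0 < h"
    using qform_pos(1) by (simp add: h_def)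
  have t_le: "\<bar>a * N\<bar> \<le> 16 * \<bar>G - g\<bar> / g" "\<bar>a * N\<bar> \<le> 1 / 2"
    using abs_mult_le_mult[OF step_coeff_le(1) step_ratio_le] abs_mult_le_mult[OF step_coeff_le(2) step_ratio_le]
    by (simp_all add: a_def N_def h_def)
  have "qform G w y z = h + a * (G * y\<^sup>2 - g * x\<^sup>2 + w * x * y)"
    using qform_step[OF _ recurrence] G_bounds by (simp add: a_def h_def)
  also have "\<dots> = h * (1 + a * N)"
    using h_pos by (simp add: N_def field_simps)
  moreover have "0 < 1 + a * N"
    using t_le(2) by (simp add: abs_le_iff)
  ultimately have "ln (qform G w y z) = ln h + ln (1 + a * N)"
    using h_pos by (simp add: ln_mult)
  then have split: "ln (qform G w y z) - ln h - a * \<rho> = (ln (1 + a * N) - a * N) + a * (N - \<rho>)"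
    by (simp add: algebra_simps)
  have ln_err: "\<bar>ln (1 + a * N) - a * N\<bar> \<le> 512 * \<bar>G - g\<bar> / g\<^sup>2"
  proof -
    have "\<bar>ln (1 + a * N) - a * N\<bar> \<le> 2 * (a * N)\<^sup>2"
      by (rule abs_ln_one_plus_x_minus_x_bound[OF t_le(2)])
    also have "\<dots> \<le> 2 * (16 * \<bar>G - g\<bar> / g)\<^sup>2"
      using power_mono[OF t_le(1), of 2] by simp
    also have "\<dots> \<le> 512 * \<bar>G - g\<bar> / g\<^sup>2"
      using mult_right_mono[OF G_close, of "\<bar>G - g\<bar>"] by (simp add: power2_eq_square divide_right_mono)
    finally show ?thesis .
  qed
  have ratio_err: "\<bar>a * (N - \<rho>)\<bar> \<le> (4 + 4 * B) * \<bar>G - g\<bar> / g\<^sup>2"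
    using abs_mult_le_mult[OF step_coeff_le(1) step_ratio_near_rho]
    by (simp add: a_def N_def \<rho>_def h_def power2_eq_square algebra_simps)
  have "\<bar>ln (qform G w y z) - ln h - a * \<rho>\<bar> \<le> 512 * \<bar>G - g\<bar> / g\<^sup>2 + (4 + 4 * B) * \<bar>G - g\<bar> / g\<^sup>2"
    unfolding split using abs_triangle_ineq[of "ln (1 + a * N) - a * N" "a * (N - \<rho>)"] ln_err ratio_err
    by linarith
  also have "\<dots> = (516 + 4 * B) * \<bar>G - g\<bar> / g\<^sup>2"
    by (simp add: add_divide_distrib[symmetric] algebra_simps)
  finally show ?thesis
    by (simp add: a_def \<rho>_def h_def)
qed

end

section \<open>Orthonormal polynomials with slowly varying recursion coefficients\<close>

lemma continuous_on_opoly: "continuous_on S (opoly \<gamma> n)"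
proof -
  have "continuous_on S (\<lambda>w. opoly_pair \<gamma> w n)"
    by (induction n) (auto simp: case_prod_beta divide_inverse intro!: continuous_intros)
  then show ?thesis
    unfolding opoly_def by (intro continuous_intros)
qed

lemma opoly_consecutive_nonzero:
  assumes "\<And>n. \<gamma> n \<noteq> 0"
  shows "opoly \<gamma> n w \<noteq> 0 \<or> opoly \<gamma> (Suc n) w \<noteq> 0"
proof (induction n)
  case 0
  show ?case
    by (simp add: opoly_0)
next
  case (Suc n)
  show ?case
  proof (rule ccontr)
    assume "\<not> ?case"
    then have "opoly \<gamma> (Suc n) w = 0" "opoly \<gamma> (Suc (Suc n)) w = 0"
      by auto
    with opoly_rec[of \<gamma> n w] assms have "opoly \<gamma> n w = 0"
      by simp
    with Suc \<open>opoly \<gamma> (Suc n) w = 0\<close> show False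
      by simp
  qed
qed

lemma recurrence_step_opoly:
  assumes "\<And>n. 0 < \<gamma> n" "0 < B" "4 * B + 32 \<le> \<gamma> n" "\<bar>\<gamma> (Suc n) - \<gamma> n\<bar> \<le> 1" "\<bar>\<omega>\<bar> \<le> B"
  shows "recurrence_step B (\<gamma> n) (\<gamma> (Suc n)) \<omega>
    (opoly \<gamma> n \<omega>) (opoly \<gamma> (Suc n) \<omega>) (opoly \<gamma> (Suc (Suc n)) \<omega>)"
proof
  show "\<gamma> (Suc n) * opoly \<gamma> (Suc (Suc n)) \<omega> = \<omega> * opoly \<gamma> (Suc n) \<omega> - \<gamma> n * opoly \<gamma> n \<omega>"
    using opoly_rec[of \<gamma> n \<omega>] assms(1)[of "Suc n"] by simp
  show "opoly \<gamma> n \<omega> \<noteq> 0 \<or> opoly \<gamma> (Suc n) \<omega> \<noteq> 0"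
    using opoly_consecutive_nonzero assms(1) by (metis less_irrefl)
qed (use assms in auto)

lemma eventually_large_with_small_increments:
  fixes \<gamma> :: "nat \<Rightarrow> real"
  assumes "filterlim \<gamma> at_top sequentially" "(\<lambda>n. \<gamma> (Suc n) - \<gamma> n) \<longlonglongrightarrow> 0"
  shows "eventually (\<lambda>n. c \<le> \<gamma> n \<and> \<bar>\<gamma> (Suc n) - \<gamma> n\<bar> \<le> 1) sequentially"
  using assms(1) tendstoD[OF assms(2), of 1] unfolding filterlim_at_top
  by (auto elim!: eventually_elim2 simp: dist_real_def)

lemma relative_increment_tendsto_zero:
  fixes \<gamma> :: "nat \<Rightarrow> real"
  assumes "filterlim \<gamma> at_top sequentially" "(\<lambda>n. \<gamma> (Suc n) - \<gamma> n) \<longlonglongrightarrow> 0"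
  shows "(\<lambda>n. (\<gamma> (Suc n) - \<gamma> n) / \<gamma> (Suc n)) \<longlonglongrightarrow> 0"
proof (rule tendsto_divide_0[OF assms(2)])
  show "filterlim (\<lambda>n. \<gamma> (Suc n)) at_infinity sequentially"
    using assms(1) by (intro filterlim_at_top_imp_at_infinity) (simp add: filterlim_sequentially_Suc)
qed

lemma relative_increment_variation_le:
  fixes g G G2 :: real
  assumes "2 \<le> g" "\<bar>G - g\<bar> \<le> 1" "2 \<le> G" "\<bar>G2 - G\<bar> \<le> 1"
  shows "\<bar>(G2 - G) / G2 - (G - g) / G\<bar> \<le> 2 * (\<bar>(G2 - G) - (G - g)\<bar> / g) + 2 * (\<bar>G2 - G\<bar> / G\<^sup>2)"
proof -
  have G: "g / 2 \<le> G" and G2: "G / 2 \<le> G2" "0 < G2"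
    using assms by (auto simp: abs_le_iff)
  have "(G2 - G) / G2 - (G - g) / G = ((G2 - G) - (G - g)) / G - (G2 - G)\<^sup>2 / (G * G2)"
    using assms G2 by (simp add: field_simps power2_eq_square)
  moreover have "\<bar>((G2 - G) - (G - g)) / G\<bar> \<le> 2 * (\<bar>(G2 - G) - (G - g)\<bar> / g)"
  proof -
    have "\<bar>((G2 - G) - (G - g)) / G\<bar> = \<bar>(G2 - G) - (G - g)\<bar> / G"
      using assms by simp
    also have "\<dots> \<le> \<bar>(G2 - G) - (G - g)\<bar> / (g / 2)"
      using assms G by (intro divide_left_mono) auto
    finally show ?thesis
      by (simp add: mult.commute)
  qed
  moreover have "\<bar>(G2 - G)\<^sup>2 / (G * G2)\<bar> \<le> 2 * (\<bar>G2 - G\<bar> / G\<^sup>2)"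
  proof -
    have "G * (G / 2) \<le> G * G2"
      using assms G2 by (intro mult_left_mono) auto
    then have denom: "G\<^sup>2 / 2 \<le> G * G2"
      by (simp add: power2_eq_square)
    have "\<bar>(G2 - G)\<^sup>2 / (G * G2)\<bar> = (G2 - G)\<^sup>2 / (G * G2)"
      using assms G2 by simp
    also have "\<dots> \<le> \<bar>G2 - G\<bar> / (G\<^sup>2 / 2)"
    proof (rule frac_le)
      show "(G2 - G)\<^sup>2 \<le> \<bar>G2 - G\<bar>"
        using mult_right_mono[OF assms(4), of "\<bar>G2 - G\<bar>"] by (simp add: power2_eq_square)
    qed (use assms denom in auto)
    finally show ?thesis
      by (simp add: mult.commute)
  qed
  ultimately show ?thesis
    using abs_triangle_ineq4[of "((G2 - G) - (G - g)) / G" "(G2 - G)\<^sup>2 / (G * G2)"] by simp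
qed

lemma summable_relative_increment_variation:
  fixes \<gamma> :: "nat \<Rightarrow> real"
  assumes C1: "filterlim \<gamma> at_top sequentially" and C2: "(\<lambda>n. \<gamma> (Suc n) - \<gamma> n) \<longlonglongrightarrow> 0"
    and C6: "summable (\<lambda>n. \<bar>\<gamma> (Suc n) - \<gamma> n\<bar> / (\<gamma> n)\<^sup>2)"
    and C7: "summable (\<lambda>n. \<bar>(\<gamma> (n + 2) - \<gamma> (n + 1)) - (\<gamma> (n + 1) - \<gamma> n)\<bar> / \<gamma> n)"
  shows "summable (\<lambda>n. \<bar>(\<gamma> (Suc (Suc n)) - \<gamma> (Suc n)) / \<gamma> (Suc (Suc n)) - (\<gamma> (Suc n) - \<gamma> n) / \<gamma> (Suc n)\<bar>)"
proof (rule summable_comparison_test_ev)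
  have ev: "eventually (\<lambda>n. 2 \<le> \<gamma> n \<and> \<bar>\<gamma> (Suc n) - \<gamma> n\<bar> \<le> 1) sequentially"
    by (rule eventually_large_with_small_increments[OF C1 C2])
  then have "eventually (\<lambda>n. 2 \<le> \<gamma> (Suc n) \<and> \<bar>\<gamma> (Suc (Suc n)) - \<gamma> (Suc n)\<bar> \<le> 1) sequentially"
    using eventually_sequentially_Suc[of "\<lambda>n. 2 \<le> \<gamma> n \<and> \<bar>\<gamma> (Suc n) - \<gamma> n\<bar> \<le> 1"] by simp
  with ev have "eventually (\<lambda>n. (2 \<le> \<gamma> n \<and> \<bar>\<gamma> (Suc n) - \<gamma> n\<bar> \<le> 1)
      \<and> (2 \<le> \<gamma> (Suc n) \<and> \<bar>\<gamma> (Suc (Suc n)) - \<gamma> (Suc n)\<bar> \<le> 1)) sequentially"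
    by (rule eventually_conj)
  then show "eventually (\<lambda>n. norm \<bar>(\<gamma> (Suc (Suc n)) - \<gamma> (Suc n)) / \<gamma> (Suc (Suc n)) - (\<gamma> (Suc n) - \<gamma> n) / \<gamma> (Suc n)\<bar>
      \<le> 2 * (\<bar>(\<gamma> (n + 2) - \<gamma> (n + 1)) - (\<gamma> (n + 1) - \<gamma> n)\<bar> / \<gamma> n)
        + 2 * (\<bar>\<gamma> (Suc (Suc n)) - \<gamma> (Suc n)\<bar> / (\<gamma> (Suc n))\<^sup>2)) sequentially"
    by eventually_elim (use relative_increment_variation_le in \<open>simp add: numeral_2_eq_2\<close>)
  show "summable (\<lambda>n. 2 * (\<bar>(\<gamma> (n + 2) - \<gamma> (n + 1)) - (\<gamma> (n + 1) - \<gamma> n)\<bar> / \<gamma> n)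
      + 2 * (\<bar>\<gamma> (Suc (Suc n)) - \<gamma> (Suc n)\<bar> / (\<gamma> (Suc n))\<^sup>2))"
    using C7 C6 summable_Suc_iff[of "\<lambda>n. \<bar>\<gamma> (Suc n) - \<gamma> n\<bar> / (\<gamma> n)\<^sup>2"]
    by (intro summable_add summable_mult) auto
qed

definition opoly_form :: "(nat \<Rightarrow> real) \<Rightarrow> nat \<Rightarrow> real \<Rightarrow> real" where
  "opoly_form \<gamma> n \<omega> = qform (\<gamma> n) \<omega> (opoly \<gamma> n \<omega>) (opoly \<gamma> (Suc n) \<omega>)"

lemma opoly_form_pos:
  assumes "\<And>n. 0 < \<gamma> n" "0 < B" "4 * B + 32 \<le> \<gamma> n" "\<bar>\<gamma> (Suc n) - \<gamma> n\<bar> \<le> 1" "\<bar>\<omega>\<bar> \<le> B"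
  shows "0 < opoly_form \<gamma> n \<omega>"
  using recurrence_step.qform_pos(1)[OF recurrence_step_opoly[OF assms]] by (simp add: opoly_form_def)

lemma ln_opoly_form_bounded:
  assumes "\<And>n. 0 < \<gamma> n" "0 < B" "4 * B + 32 \<le> \<gamma> n" "\<bar>\<gamma> (Suc n) - \<gamma> n\<bar> \<le> 1"
  shows "\<exists>K. \<forall>\<omega>. \<bar>\<omega>\<bar> \<le> B \<longrightarrow> \<bar>ln (opoly_form \<gamma> n \<omega>)\<bar> \<le> K"
proof -
  have "continuous_on (cball 0 B) (opoly_form \<gamma> n)"
    unfolding opoly_form_def qform_def by (intro continuous_intros continuous_on_opoly)
  moreover have "opoly_form \<gamma> n \<omega> \<noteq> 0" if "\<omega> \<in> cball 0 B" for \<omega>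
    using opoly_form_pos[OF assms] that by (simp add: less_imp_neq[THEN not_sym])
  ultimately have "continuous_on (cball 0 B) (\<lambda>\<omega>. ln (opoly_form \<gamma> n \<omega>))"
    by (auto intro!: continuous_intros)
  then have "bounded ((\<lambda>\<omega>. ln (opoly_form \<gamma> n \<omega>)) ` cball 0 B)"
    by (simp add: compact_imp_bounded compact_continuous_image)
  then obtain K where "\<forall>\<omega>\<in>cball 0 B. \<bar>ln (opoly_form \<gamma> n \<omega>)\<bar> \<le> K"
    by (auto simp: bounded_iff)
  then show ?thesis
    by (intro exI[of _ K]) (simp add: dist_real_def)
qed

lemma uniform_limit_ln_opoly_form:
  fixes \<gamma> :: "nat \<Rightarrow> real" and B :: real
  assumes pos: "\<And>n. 0 < \<gamma> n"
    and C1: "filterlim \<gamma> at_top sequentially" and C2: "(\<lambda>n. \<gamma> (Suc n) - \<gamma> n) \<longlonglongrightarrow> 0"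
    and C6: "summable (\<lambda>n. \<bar>\<gamma> (Suc n) - \<gamma> n\<bar> / (\<gamma> n)\<^sup>2)"
    and C7: "summable (\<lambda>n. \<bar>(\<gamma> (n + 2) - \<gamma> (n + 1)) - (\<gamma> (n + 1) - \<gamma> n)\<bar> / \<gamma> n)"
    and B: "0 < B" and N0: "\<And>n. N0 \<le> n \<Longrightarrow> 4 * B + 32 \<le> \<gamma> n \<and> \<bar>\<gamma> (Suc n) - \<gamma> n\<bar> \<le> 1"
  obtains Lf K
  where "uniform_limit {\<omega>. \<bar>\<omega>\<bar> \<le> B} (\<lambda>k \<omega>. ln (opoly_form \<gamma> (k + N0) \<omega>)) Lf sequentially"
    and "\<And>k \<omega>. \<omega> \<in> {\<omega>. \<bar>\<omega>\<bar> \<le> B} \<Longrightarrow> \<bar>ln (opoly_form \<gamma> (k + N0) \<omega>)\<bar> \<le> K"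
    and "\<And>\<omega>. \<omega> \<in> {\<omega>. \<bar>\<omega>\<bar> \<le> B} \<Longrightarrow> \<bar>Lf \<omega>\<bar> \<le> K"
proof -
  define \<Omega> where "\<Omega> = {\<omega>::real. \<bar>\<omega>\<bar> \<le> B}"
  define c where "c n = \<bar>\<gamma> (Suc n) - \<gamma> n\<bar> / (\<gamma> n)\<^sup>2" for n
  define a where "a n = (\<gamma> (Suc n) - \<gamma> n) / \<gamma> (Suc n)" for n
  define L where "L k \<omega> = ln (opoly_form \<gamma> (k + N0) \<omega>)" for k \<omega>
  define R where "R k \<omega> = 1 - 2 * \<gamma> (k + N0) * (opoly \<gamma> (k + N0) \<omega>)\<^sup>2 / opoly_form \<gamma> (k + N0) \<omega>" for k \<omega>
  have step: "recurrence_step B (\<gamma> (k + N0)) (\<gamma> (Suc (k + N0))) \<omega>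
      (opoly \<gamma> (k + N0) \<omega>) (opoly \<gamma> (Suc (k + N0)) \<omega>) (opoly \<gamma> (Suc (Suc (k + N0))) \<omega>)"
    if "\<omega> \<in> \<Omega>" for k \<omega>
    using recurrence_step_opoly[OF pos B] N0[of "k + N0"] that by (auto simp: \<Omega>_def)
  have c_summable: "summable (\<lambda>k. c (k + N0))"
    unfolding summable_iff_shift[of c N0] using C6 by (simp add: c_def[abs_def])
  have a_variation: "summable (\<lambda>k. \<bar>a (Suc k + N0) - a (k + N0)\<bar>)"
    using summable_relative_increment_variation[OF C1 C2 C6 C7]
      summable_iff_shift[of "\<lambda>n. \<bar>a (Suc n) - a n\<bar>" N0] by (simp add: a_def)
  have a_lim: "(\<lambda>k. a (k + N0)) \<longlonglongrightarrow> 0"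
    using LIMSEQ_ignore_initial_segment[OF relative_increment_tendsto_zero[OF C1 C2]] by (simp add: a_def)
  have L_step: "\<bar>L (Suc k) \<omega> - L k \<omega> - a (k + N0) * R k \<omega>\<bar> \<le> (516 + 4 * B) * c (k + N0)"
    if "\<omega> \<in> \<Omega>" for k \<omega>
    using recurrence_step.ln_qform_step_le[OF step[of \<omega> k, OF that]]
    by (simp add: L_def R_def a_def c_def opoly_form_def)
  have R_le: "\<bar>R k \<omega>\<bar> \<le> 3" if "\<omega> \<in> \<Omega>" for k \<omega>
    using recurrence_step.rho_le[OF step[of \<omega> k, OF that]] by (simp add: R_def opoly_form_def)
  have pair_le: "\<bar>a (k + N0) * (R k \<omega> + R (Suc k) \<omega>)\<bar> \<le> 32 * (3 * B\<^sup>2 + 4 * B + 6) * c (k + N0)"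
    if "\<omega> \<in> \<Omega>" for k \<omega>
    using recurrence_step.step_coeff_mult_rho_sum_le[OF step[of \<omega> k, OF that]]
    by (simp add: R_def a_def c_def opoly_form_def)
  obtain K0 where "\<forall>\<omega>. \<bar>\<omega>\<bar> \<le> B \<longrightarrow> \<bar>ln (opoly_form \<gamma> N0 \<omega>)\<bar> \<le> K0"
    using ln_opoly_form_bounded[where \<gamma> = \<gamma>, OF pos B] N0[of N0] by blast
  then have L0_le: "\<And>\<omega>. \<omega> \<in> \<Omega> \<Longrightarrow> \<bar>L 0 \<omega>\<bar> \<le> K0"
    by (simp add: \<Omega>_def L_def)
  show thesis
    using uniform_limit_by_parts_perturbation[where X = \<Omega> and L = L and R = R and A = "\<lambda>k. a (k + N0)",
        OF L_step summable_mult[OF c_summable] R_le pair_le summable_mult[OF c_summable] a_variation a_lim L0_le]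
      that unfolding \<Omega>_def L_def by blast
qed

lemma uniform_limit_opoly_cross_term:
  fixes \<gamma> :: "nat \<Rightarrow> real" and B :: real
  assumes pos: "\<And>n. 0 < \<gamma> n" and C1: "filterlim \<gamma> at_top sequentially" and B: "0 < B"
    and N0: "\<And>n. N0 \<le> n \<Longrightarrow> 4 * B + 32 \<le> \<gamma> n \<and> \<bar>\<gamma> (Suc n) - \<gamma> n\<bar> \<le> 1"
    and form_le: "\<And>k \<omega>. \<bar>\<omega>\<bar> \<le> B \<Longrightarrow> opoly_form \<gamma> (k + N0) \<omega> \<le> M"
  shows "uniform_limit {\<omega>. \<bar>\<omega>\<bar> \<le> B} (\<lambda>k \<omega>. \<omega> * opoly \<gamma> (k + N0) \<omega> * opoly \<gamma> (Suc (k + N0)) \<omega>)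
    (\<lambda>\<omega>. 0) sequentially"
proof (rule uniform_limit_null_comparison)
  show "\<forall>\<^sub>F k in sequentially. \<forall>\<omega>\<in>{\<omega>. \<bar>\<omega>\<bar> \<le> B}.
      norm (\<omega> * opoly \<gamma> (k + N0) \<omega> * opoly \<gamma> (Suc (k + N0)) \<omega>) \<le> B * M / \<gamma> (k + N0)"
  proof (intro always_eventually allI ballI)
    fix k \<omega> assume "\<omega> \<in> {\<omega>. \<bar>\<omega>\<bar> \<le> B}"
    then have step: "recurrence_step B (\<gamma> (k + N0)) (\<gamma> (Suc (k + N0))) \<omega>
        (opoly \<gamma> (k + N0) \<omega>) (opoly \<gamma> (Suc (k + N0)) \<omega>) (opoly \<gamma> (Suc (Suc (k + N0))) \<omega>)"
      and "opoly_form \<gamma> (k + N0) \<omega> \<le> M"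
      using recurrence_step_opoly[OF pos B] N0[of "k + N0"] form_le by auto
    then have "B * opoly_form \<gamma> (k + N0) \<omega> / \<gamma> (k + N0) \<le> B * M / \<gamma> (k + N0)"
      using B pos[of "k + N0"] by (intro divide_right_mono mult_left_mono) auto
    with recurrence_step.abs_cross_term_le[OF step]
    show "norm (\<omega> * opoly \<gamma> (k + N0) \<omega> * opoly \<gamma> (Suc (k + N0)) \<omega>) \<le> B * M / \<gamma> (k + N0)"
      unfolding opoly_form_def real_norm_def by (rule order_trans)
  qed
  have "filterlim (\<lambda>k. \<gamma> (k + N0)) at_infinity sequentially"
    using C1 filterlim_sequentially_shift_iff[of \<gamma> N0 at_top] by (simp add: filterlim_at_top_imp_at_infinity)
  then show "uniform_limit {\<omega>. \<bar>\<omega>\<bar> \<le> B} (\<lambda>k \<omega>. B * M / \<gamma> (k + N0)) (\<lambda>\<omega>. 0) sequentially"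
    by (intro tendsto_imp_uniform_limit_const tendsto_divide_0[OF tendsto_const])
qed

lemma uniform_limit_opoly_energy:
  fixes \<gamma> :: "nat \<Rightarrow> real" and B :: real
  assumes pos: "\<And>n. 0 < \<gamma> n"
    and C1: "filterlim \<gamma> at_top sequentially" and C2: "(\<lambda>n. \<gamma> (Suc n) - \<gamma> n) \<longlonglongrightarrow> 0"
    and C6: "summable (\<lambda>n. \<bar>\<gamma> (Suc n) - \<gamma> n\<bar> / (\<gamma> n)\<^sup>2)"
    and C7: "summable (\<lambda>n. \<bar>(\<gamma> (n + 2) - \<gamma> (n + 1)) - (\<gamma> (n + 1) - \<gamma> n)\<bar> / \<gamma> n)"
    and B: "0 < B"
  obtains \<Phi> m M
  where "uniform_limit {\<omega>. \<bar>\<omega>\<bar> \<le> B} (\<lambda>n \<omega>. \<gamma> n * ((opoly \<gamma> n \<omega>)\<^sup>2 + (opoly \<gamma> (Suc n) \<omega>)\<^sup>2)) \<Phi> sequentially"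
    and "0 < m" "m < M" "\<And>\<omega>. \<bar>\<omega>\<bar> \<le> B \<Longrightarrow> m \<le> \<Phi> \<omega> \<and> \<Phi> \<omega> \<le> M"
proof -
  obtain N0 where N0: "\<And>n. N0 \<le> n \<Longrightarrow> 4 * B + 32 \<le> \<gamma> n \<and> \<bar>\<gamma> (Suc n) - \<gamma> n\<bar> \<le> 1"
    using eventually_large_with_small_increments[OF C1 C2] unfolding eventually_sequentially by blast
  obtain Lf K where lim: "uniform_limit {\<omega>. \<bar>\<omega>\<bar> \<le> B} (\<lambda>k \<omega>. ln (opoly_form \<gamma> (k + N0) \<omega>)) Lf sequentially"
    and L_le: "\<And>k \<omega>. \<omega> \<in> {\<omega>. \<bar>\<omega>\<bar> \<le> B} \<Longrightarrow> \<bar>ln (opoly_form \<gamma> (k + N0) \<omega>)\<bar> \<le> K"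
    and Lf_le: "\<And>\<omega>. \<omega> \<in> {\<omega>. \<bar>\<omega>\<bar> \<le> B} \<Longrightarrow> \<bar>Lf \<omega>\<bar> \<le> K"
    using uniform_limit_ln_opoly_form[OF pos C1 C2 C6 C7 B N0] by metis
  have form_pos: "0 < opoly_form \<gamma> (k + N0) \<omega>" if "\<bar>\<omega>\<bar> \<le> B" for k \<omega>
    using opoly_form_pos[where \<gamma> = \<gamma>, OF pos B] N0[of "k + N0"] that by auto
  have energy_eq: "\<gamma> (k + N0) * ((opoly \<gamma> (k + N0) \<omega>)\<^sup>2 + (opoly \<gamma> (Suc (k + N0)) \<omega>)\<^sup>2)
      = exp (ln (opoly_form \<gamma> (k + N0) \<omega>)) + \<omega> * opoly \<gamma> (k + N0) \<omega> * opoly \<gamma> (Suc (k + N0)) \<omega>"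
    if "\<bar>\<omega>\<bar> \<le> B" for k \<omega>
    using exp_ln[OF form_pos[OF that, of k]] by (simp add: opoly_form_def qform_def)
  have form_le: "opoly_form \<gamma> (k + N0) \<omega> \<le> exp K" if "\<bar>\<omega>\<bar> \<le> B" for k \<omega>
  proof -
    have "ln (opoly_form \<gamma> (k + N0) \<omega>) \<le> K"
      using L_le[of \<omega> k] that by (simp add: abs_le_iff)
    then show ?thesis
      using form_pos[OF that, of k] by (metis exp_le_cancel_iff exp_ln)
  qed
  have "uniform_limit {\<omega>. \<bar>\<omega>\<bar> \<le> B} (\<lambda>k \<omega>. exp (ln (opoly_form \<gamma> (k + N0) \<omega>))
      + \<omega> * opoly \<gamma> (k + N0) \<omega> * opoly \<gamma> (Suc (k + N0)) \<omega>) (\<lambda>\<omega>. exp (Lf \<omega>) + 0) sequentially"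
    using uniform_limit_exp[OF lim L_le] uniform_limit_opoly_cross_term[OF pos C1 B N0 form_le]
    by (rule uniform_limit_add)
  then have "uniform_limit {\<omega>. \<bar>\<omega>\<bar> \<le> B}
      (\<lambda>k \<omega>. \<gamma> (k + N0) * ((opoly \<gamma> (k + N0) \<omega>)\<^sup>2 + (opoly \<gamma> (Suc (k + N0)) \<omega>)\<^sup>2))
      (\<lambda>\<omega>. exp (Lf \<omega>)) sequentially"
    by (rule uniform_limit_cong'[THEN iffD1, rotated -1]) (simp_all add: energy_eq)
  then have "uniform_limit {\<omega>. \<bar>\<omega>\<bar> \<le> B} (\<lambda>n \<omega>. \<gamma> n * ((opoly \<gamma> n \<omega>)\<^sup>2 + (opoly \<gamma> (Suc n) \<omega>)\<^sup>2))
      (\<lambda>\<omega>. exp (Lf \<omega>)) sequentially"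
    using filterlim_sequentially_shift_iff[of "\<lambda>n \<omega>. \<gamma> n * ((opoly \<gamma> n \<omega>)\<^sup>2 + (opoly \<gamma> (Suc n) \<omega>)\<^sup>2)" N0]
    by simp
  moreover have "exp (- K) \<le> exp (Lf \<omega>) \<and> exp (Lf \<omega>) \<le> exp K + 1" if "\<bar>\<omega>\<bar> \<le> B" for \<omega>
  proof -
    have "- K \<le> Lf \<omega>" "Lf \<omega> \<le> K"
      using Lf_le[of \<omega>] that by (auto simp: abs_le_iff)
    then have "exp (- K) \<le> exp (Lf \<omega>)" "exp (Lf \<omega>) \<le> exp K"
      by simp_all
    then show ?thesis
      by linarith
  qed
  moreover have "exp (- K) < exp K + 1"
  proof -
    have "0 \<le> K"
      using Lf_le[of 0] B abs_ge_zero[of "Lf 0"] by simp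
    then have "exp (- K) \<le> exp K"
      by simp
    then show ?thesis
      by linarith
  qed
  ultimately show thesis
    by (intro that[of "\<lambda>\<omega>. exp (Lf \<omega>)" "exp (- K)" "exp K + 1"]) force+
qed

theorem theorem2:
  fixes \<gamma> :: "nat \<Rightarrow> real"
  assumes pos: "\<And>n. \<gamma> n > 0"
    and C1: "filterlim \<gamma> at_top sequentially"
    and C2: "(\<lambda>n. \<gamma> (Suc n) - \<gamma> n) \<longlonglongrightarrow> 0"
    and C3: "\<exists>n0 m0. \<forall>n\<ge>n0. \<forall>m\<ge>m0. \<gamma> (n + m) > \<gamma> n"
    and C4: "\<not> summable (\<lambda>j. 1 / \<gamma> j)"
    and C5: "\<exists>\<kappa>>1. summable (\<lambda>j. \<gamma> j powr (-\<kappa>))"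
    and C6: "summable (\<lambda>n. \<bar>\<gamma> (Suc n) - \<gamma> n\<bar> / (\<gamma> n)\<^sup>2)"
    and C7: "summable (\<lambda>n. \<bar>(\<gamma> (n + 2) - \<gamma> (n + 1)) - (\<gamma> (n + 1) - \<gamma> n)\<bar> / \<gamma> n)"
  shows "(\<forall>\<omega>::real. convergent
            (\<lambda>n. \<gamma> n * ((opoly \<gamma> n \<omega>)\<^sup>2 + (opoly \<gamma> (Suc n) \<omega>)\<^sup>2)))
       \<and> (\<forall>B>0. \<exists>mB MB. 0 < mB \<and> mB < MB \<and>
            (\<forall>\<omega>::real. \<bar>\<omega>\<bar> \<le> B \<longrightarrow>
               mB \<le> lim (\<lambda>n. \<gamma> n * ((opoly \<gamma> n \<omega>)\<^sup>2 + (opoly \<gamma> (Suc n) \<omega>)\<^sup>2)) \<and>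
               lim (\<lambda>n. \<gamma> n * ((opoly \<gamma> n \<omega>)\<^sup>2 + (opoly \<gamma> (Suc n) \<omega>)\<^sup>2)) \<le> MB) \<and>
            uniform_limit {\<omega>. \<bar>\<omega>\<bar> \<le> B}
              (\<lambda>n \<omega>. \<gamma> n * ((opoly \<gamma> n \<omega>)\<^sup>2 + (opoly \<gamma> (Suc n) \<omega>)\<^sup>2))
              (\<lambda>\<omega>. lim (\<lambda>n. \<gamma> n * ((opoly \<gamma> n \<omega>)\<^sup>2 + (opoly \<gamma> (Suc n) \<omega>)\<^sup>2)))
              sequentially)"
proof -
  let ?f = "\<lambda>n \<omega>. \<gamma> n * ((opoly \<gamma> n \<omega>)\<^sup>2 + (opoly \<gamma> (Suc n) \<omega>)\<^sup>2)"
  have "convergent (\<lambda>n. ?f n \<omega>)" for \<omega>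
  proof -
    have "0 < \<bar>\<omega>\<bar> + 1"
      by simp
    then obtain \<Phi> where "uniform_limit {w. \<bar>w\<bar> \<le> \<bar>\<omega>\<bar> + 1} ?f \<Phi> sequentially"
      using uniform_limit_opoly_energy[OF pos C1 C2 C6 C7] by blast
    then have "(\<lambda>n. ?f n \<omega>) \<longlonglongrightarrow> \<Phi> \<omega>"
      by (rule tendsto_uniform_limitI) simp
    then show ?thesis
      by (rule convergentI)
  qed
  moreover have "\<exists>mB MB. 0 < mB \<and> mB < MB \<and>
      (\<forall>\<omega>. \<bar>\<omega>\<bar> \<le> B \<longrightarrow> mB \<le> lim (\<lambda>n. ?f n \<omega>) \<and> lim (\<lambda>n. ?f n \<omega>) \<le> MB) \<and>
      uniform_limit {\<omega>. \<bar>\<omega>\<bar> \<le> B} ?f (\<lambda>\<omega>. lim (\<lambda>n. ?f n \<omega>)) sequentially" if B: "0 < B" for B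
  proof -
    obtain \<Phi> m M where ul: "uniform_limit {\<omega>. \<bar>\<omega>\<bar> \<le> B} ?f \<Phi> sequentially"
      and "0 < m" "m < M" "\<And>\<omega>. \<bar>\<omega>\<bar> \<le> B \<Longrightarrow> m \<le> \<Phi> \<omega> \<and> \<Phi> \<omega> \<le> M"
      using uniform_limit_opoly_energy[OF pos C1 C2 C6 C7 B] by blast
    then show ?thesis
      using uniform_limit_lim[OF ul] uniform_limit_imp_lim_eq[OF ul] by (intro exI[of _ m] exI[of _ M]) simp
  qed
  ultimately show ?thesis
    by blast
qed

end
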